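(* Let $A, m, e$ be constants and $\Lambda$ a constant, and on a region with coordinates $(y,x,\phi)$ where $F>0$ and $G>0$ consider the Riemannian metric \[ h_\Lambda = \frac{1}{F^2}\,dy^2 + \frac{1}{GF}\,dx^2 + \frac{G}{F}\,d\phi^2, \] with \[ F = F_\Lambda(y) = y^2 - 2mAy^3 + e^2A^2y^4 - 1 - \frac{\Lambda}{3A^2},\qquad G(x) = 1 - x^2 - 2mAx^3 - e^2A^2x^4 . \] Then for any two values $\Lambda_1,\Lambda_2$ (on a common domain where the metrics are defined) the metrics $h_{\Lambda_1}$ and $h_{\Lambda_2}$ are projectively equivalent via the identity map, i.e. they have the same unparametrised geodesics. In particular, the null geodesics of the cosmological $C$-metric \[ g = \frac{1}{A^2(x^2+y^2)}\Big(-F\,dt^2 + \frac{1}{F}dy^2 + \frac{1}{G}dx^2 + G\,d\phi^2\Big) \] project to curves (the unparametrised geodesics of its optical metric $h_\Lambda$) that do not depend on $\Lambda$.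
   Context: The metric $h_\Lambda$ is the optical metric of the cosmological $C$-metric $g$ with respect to the static Killing vector $\partial/\partial t$ (i.e. $g = V^2(-dt^2 + h_\Lambda)$ with $V^2 = F/(A^2(x^2+y^2))$). Two metrics are projectively equivalent if they share the same unparametrised geodesics; equivalently their Levi-Civita connections satisfy $\tilde\Gamma^i_{jk} = \Gamma^i_{jk} + \delta^i_j\omega_k + \delta^i_k\omega_j$ for some one-form $\omega$. *)

theory Defs
  imports "HOL-Analysis.Analysis"
begin

text \<open>Coordinates on a region of R^3: a point p :: real^3 has
  p$1 = y, p$2 = x, p$3 = phi.  A (pseudo-)Riemannian metric in these
  coordinates is a matrix-valued function g :: real^3 => real^3^3.\<close>

definition partial :: "(real^3 \<Rightarrow> real) \<Rightarrow> 3 \<Rightarrow> real^3 \<Rightarrow> real" where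
  "partial f i p = deriv (\<lambda>t. f (p + t *\<^sub>R axis i 1)) 0"

definition christoffel :: "(real^3 \<Rightarrow> real^3^3) \<Rightarrow> real^3 \<Rightarrow> 3 \<Rightarrow> 3 \<Rightarrow> 3 \<Rightarrow> real" where
  "christoffel g p i j k =
     (1/2) * (\<Sum>l\<in>UNIV. (matrix_inv (g p)) $ i $ l *
        (partial (\<lambda>q. g q $ l $ k) j p + partial (\<lambda>q. g q $ l $ j) k p
         - partial (\<lambda>q. g q $ j $ k) l p))"

definition proj_equiv_on :: "(real^3) set \<Rightarrow> (real^3 \<Rightarrow> real^3^3) \<Rightarrow> (real^3 \<Rightarrow> real^3^3) \<Rightarrow> bool" where
  "proj_equiv_on U g1 g2 \<longleftrightarrow>
     (\<exists>\<omega> :: real^3 \<Rightarrow> 3 \<Rightarrow> real. \<forall>p\<in>U. \<forall>i j k.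
        christoffel g2 p i j k = christoffel g1 p i j k
          + (if i = j then \<omega> p k else 0) + (if i = k then \<omega> p j else 0))"

definition F_Lam :: "real \<Rightarrow> real \<Rightarrow> real \<Rightarrow> real \<Rightarrow> real \<Rightarrow> real" where
  "F_Lam A m e \<Lambda> y = y^2 - 2*m*A*y^3 + e^2*A^2*y^4 - 1 - \<Lambda> / (3*A^2)"

definition G_fun :: "real \<Rightarrow> real \<Rightarrow> real \<Rightarrow> real \<Rightarrow> real" where
  "G_fun A m e x = 1 - x^2 - 2*m*A*x^3 - e^2*A^2*x^4"

definition h_Lam :: "real \<Rightarrow> real \<Rightarrow> real \<Rightarrow> real \<Rightarrow> real^3 \<Rightarrow> real^3^3" where
  "h_Lam A m e \<Lambda> p = (\<chi> i j. if i \<noteq> j then 0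
      else if i = 1 then 1 / (F_Lam A m e \<Lambda> (p$1))^2
      else if i = 2 then 1 / (G_fun A m e (p$2) * F_Lam A m e \<Lambda> (p$1))
      else G_fun A m e (p$2) / F_Lam A m e \<Lambda> (p$1))"

end

theory Submission imports Defs begin

text \<open>Changing \<Lambda> only shifts F by a constant, so F' does not depend on \<Lambda>.  The optical metric
  is diagonal and depends on y only through F and on x only through G, so its Christoffel symbols
  are rational expressions in F, F', G, G'.  For two such metrics sharing F' and G, every difference
  of Christoffel symbols has the projective form \<delta>^i_j \<omega>_k + \<delta>^i_k \<omega>_j for the single one-form
  \<omega> = (F'/2) (1/F_1 - 1/F_2) dy.\<close>

lemma matrix_inv_unique:
  fixes A B :: "real^'n^'n"
  assumes "A ** B = mat 1" "B ** A = mat 1"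
  shows "matrix_inv A = B"
proof -
  let ?C = "matrix_inv A"
  have C: "A ** ?C = mat 1 \<and> ?C ** A = mat 1"
    unfolding matrix_inv_def by (rule someI[of _ B]) (use assms in blast)
  have "?C = ?C ** (A ** B)"
    using assms by (simp add: matrix_mul_rid)
  also have "\<dots> = (?C ** A) ** B"
    by (simp add: matrix_mul_assoc)
  also have "\<dots> = B"
    using C by (simp add: matrix_mul_lid)
  finally show ?thesis .
qed

lemma matrix_inv_diagonal:
  fixes d :: "'n::finite \<Rightarrow> real"
  assumes "\<And>i. d i \<noteq> 0"
  shows "matrix_inv (\<chi> i j. if i = j then d i else 0) = (\<chi> i j. if i = j then 1 / d i else 0)"
  by (rule matrix_inv_unique)
    (use assms in \<open>auto simp: matrix_matrix_mult_def mat_def vec_eq_iff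
       if_distrib[of "\<lambda>x. x * _"] sum.delta cong: if_cong\<close>)

lemma christoffel_diagonal:
  assumes off_diag: "\<And>i j. i \<noteq> j \<Longrightarrow> g p $ i $ j = 0" and diag: "\<And>i. g p $ i $ i \<noteq> 0"
  shows "christoffel g p i j k =
    (partial (\<lambda>q. g q $ i $ k) j p + partial (\<lambda>q. g q $ i $ j) k p
     - partial (\<lambda>q. g q $ j $ k) i p) / (2 * g p $ i $ i)"
proof -
  have "g p = (\<chi> i j. if i = j then g p $ i $ i else 0)"
    using off_diag by (simp add: vec_eq_iff)
  then have "matrix_inv (g p) = (\<chi> i j. if i = j then 1 / g p $ i $ i else 0)"
    using matrix_inv_diagonal[of "\<lambda>i. g p $ i $ i", OF diag] by simp
  then show ?thesis
    by (simp add: christoffel_def if_distrib[of "\<lambda>x. x * _"] cong: if_cong)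
qed

lemma DERIV_inverse_power:
  fixes F :: "real \<Rightarrow> real"
  assumes F: "(F has_real_derivative F') (at y)" and F_nz: "F y \<noteq> 0"
  shows "((\<lambda>y. 1 / F y ^ n) has_real_derivative - real n * F' / F y ^ Suc n) (at y)"
proof (rule derivative_eq_intros F refl)+
  show "F y ^ n \<noteq> 0"
    using F_nz by simp
  show "(0 * F y ^ n - 1 * (real n * (F' * F y ^ (n - Suc 0)))) / (F y ^ n * F y ^ n) =
     - real n * F' / F y ^ Suc n"
    using F_nz by (cases n) (simp_all add: field_simps)
qed

lemma partial_separable:
  fixes a b :: "real \<Rightarrow> real"
  assumes a: "(a has_real_derivative a') (at (p$1))" and b: "(b has_real_derivative b') (at (p$2))"
  shows "partial (\<lambda>q. a (q$1) * b (q$2)) 1 p = a' * b (p$2)"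
    and "partial (\<lambda>q. a (q$1) * b (q$2)) 2 p = a (p$1) * b'"
    and "partial (\<lambda>q. a (q$1) * b (q$2)) 3 p = 0"
proof -
  have axis_comp: "(p + t *\<^sub>R axis i 1) $ k = p $ k + (if k = i then t else 0)" for t i k
    by (simp add: axis_def)
  have "((\<lambda>t. a (p$1 + t) * b (p$2)) has_real_derivative a' * b (p$2)) (at 0)"
    using DERIV_shift[of a a' 0 "p$1"] a by (intro DERIV_cmult_right) (simp add: add.commute)
  then show "partial (\<lambda>q. a (q$1) * b (q$2)) 1 p = a' * b (p$2)"
    unfolding partial_def axis_comp by (simp add: DERIV_imp_deriv)
  have "((\<lambda>t. a (p$1) * b (p$2 + t)) has_real_derivative a (p$1) * b') (at 0)"
    using DERIV_shift[of b b' 0 "p$2"] b by (intro DERIV_cmult) (simp add: add.commute)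
  then show "partial (\<lambda>q. a (q$1) * b (q$2)) 2 p = a (p$1) * b'"
    unfolding partial_def axis_comp by (simp add: DERIV_imp_deriv)
  show "partial (\<lambda>q. a (q$1) * b (q$2)) 3 p = 0"
    unfolding partial_def axis_comp by simp
qed

lemma partial_const: "partial (\<lambda>q. c) i p = 0"
  unfolding partial_def by simp

definition optical_metric :: "(real \<Rightarrow> real) \<Rightarrow> (real \<Rightarrow> real) \<Rightarrow> real^3 \<Rightarrow> real^3^3" where
  "optical_metric F G p = (\<chi> i j. if i \<noteq> j then 0
      else if i = 1 then 1 / (F (p$1))^2
      else if i = 2 then 1 / (G (p$2) * F (p$1))
      else G (p$2) / F (p$1))"

lemma h_Lam_eq_optical_metric: "h_Lam A m e \<Lambda> = optical_metric (F_Lam A m e \<Lambda>) (G_fun A m e)"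
  by (simp add: fun_eq_iff h_Lam_def optical_metric_def)

lemma partial_optical_metric:
  assumes F: "(F has_real_derivative F') (at (p$1))" and G: "(G has_real_derivative G') (at (p$2))"
    and F_nz: "F (p$1) \<noteq> 0" and G_nz: "G (p$2) \<noteq> 0"
  shows "partial (\<lambda>q. optical_metric F G q $ l $ k) j p =
    (if l \<noteq> k then 0
     else if l = 1 then (if j = 1 then - 2 * F' / F (p$1) ^ 3 else 0)
     else if l = 2 then (if j = 1 then - F' / (F (p$1) ^ 2 * G (p$2))
                         else if j = 2 then - G' / (F (p$1) * G (p$2) ^ 2) else 0)
     else (if j = 1 then - F' * G (p$2) / F (p$1) ^ 2
           else if j = 2 then G' / F (p$1) else 0))"
proof (cases "l = k")
  case False
  then have "(\<lambda>q. optical_metric F G q $ l $ k) = (\<lambda>q. 0)"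
    by (simp add: optical_metric_def)
  then show ?thesis
    using False by (simp add: partial_const)
next
  case True
  note inv_F2 = DERIV_inverse_power[OF F F_nz, where n = 2]
    and inv_F = DERIV_inverse_power[OF F F_nz, where n = 1, simplified]
    and inv_G = DERIV_inverse_power[OF G G_nz, where n = 1, simplified]
  have "(\<lambda>q. optical_metric F G q $ 1 $ 1) = (\<lambda>q. 1 / F (q$1) ^ 2 * 1)"
    and "(\<lambda>q. optical_metric F G q $ 2 $ 2) = (\<lambda>q. 1 / F (q$1) * (1 / G (q$2)))"
    and "(\<lambda>q. optical_metric F G q $ 3 $ 3) = (\<lambda>q. 1 / F (q$1) * G (q$2))"
    by (simp_all add: fun_eq_iff optical_metric_def)
  moreover note partial_separable[OF inv_F2 DERIV_const[of 1 "at (p$2)"]]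
    partial_separable[OF inv_F inv_G] partial_separable[OF inv_F G]
  ultimately show ?thesis
    using True exhaust_3[of k] exhaust_3[of j]
    by (elim disjE) (simp_all add: field_simps power2_eq_square)
qed

lemma christoffel_optical_metric:
  assumes "F (p$1) \<noteq> 0" "G (p$2) \<noteq> 0"
  shows "christoffel (optical_metric F G) p i j k =
    (partial (\<lambda>q. optical_metric F G q $ i $ k) j p + partial (\<lambda>q. optical_metric F G q $ i $ j) k p
     - partial (\<lambda>q. optical_metric F G q $ j $ k) i p) / (2 * optical_metric F G p $ i $ i)"
proof (rule christoffel_diagonal)
  show "optical_metric F G p $ i $ j = 0" if "i \<noteq> j" for i j
    using that by (simp add: optical_metric_def)
  show "optical_metric F G p $ i $ i \<noteq> 0" for i
    using assms exhaust_3[of i] by (auto simp: optical_metric_def)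
qed

lemma proj_equiv_optical_metric:
  fixes F\<^sub>1 F\<^sub>2 G :: "real \<Rightarrow> real"
  assumes F\<^sub>1: "\<And>y. (F\<^sub>1 has_real_derivative F' y) (at y)"
    and F\<^sub>2: "\<And>y. (F\<^sub>2 has_real_derivative F' y) (at y)"
    and G: "\<And>x. (G has_real_derivative G' x) (at x)"
  shows "proj_equiv_on {p. F\<^sub>1 (p$1) > 0 \<and> F\<^sub>2 (p$1) > 0 \<and> G (p$2) > 0}
           (optical_metric F\<^sub>1 G) (optical_metric F\<^sub>2 G)"
  unfolding proj_equiv_on_def
proof (intro exI ballI allI)
  fix p :: "real^3" and i j k :: 3
  let ?\<omega> = "\<lambda>p k. if k = 1 then F' (p$1) / 2 * (1 / F\<^sub>1 (p$1) - 1 / F\<^sub>2 (p$1)) else 0"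
  assume "p \<in> {p. F\<^sub>1 (p$1) > 0 \<and> F\<^sub>2 (p$1) > 0 \<and> G (p$2) > 0}"
  then have pos: "F\<^sub>1 (p$1) > 0" "F\<^sub>2 (p$1) > 0" "G (p$2) > 0"
    by auto
  then have nz: "F\<^sub>1 (p$1) \<noteq> 0" "F\<^sub>2 (p$1) \<noteq> 0" "G (p$2) \<noteq> 0"
    by auto
  note \<Gamma>\<^sub>1 = christoffel_optical_metric[of F\<^sub>1 p G, OF nz(1,3)] partial_optical_metric[OF F\<^sub>1 G nz(1,3)]
  note \<Gamma>\<^sub>2 = christoffel_optical_metric[of F\<^sub>2 p G, OF nz(2,3)] partial_optical_metric[OF F\<^sub>2 G nz(2,3)]
  show "christoffel (optical_metric F\<^sub>2 G) p i j k =
      christoffel (optical_metric F\<^sub>1 G) p i j k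
        + (if i = j then ?\<omega> p k else 0) + (if i = k then ?\<omega> p j else 0)"
    using exhaust_3[of i] exhaust_3[of j] exhaust_3[of k] pos
    apply (simp only: \<Gamma>\<^sub>1 \<Gamma>\<^sub>2)
    apply (elim disjE)
    by (simp_all add: optical_metric_def field_simps power2_eq_square power3_eq_cube)
qed

lemma F_Lam_has_derivative:
  "(F_Lam A m e \<Lambda> has_real_derivative 2*y - 6*m*A*y^2 + 4*e^2*A^2*y^3) (at y)"
  unfolding F_Lam_def[abs_def]
  by (rule derivative_eq_intros refl)+ (simp add: algebra_simps power2_eq_square power3_eq_cube)

lemma G_fun_has_derivative:
  "(G_fun A m e has_real_derivative - 2*x - 6*m*A*x^2 - 4*e^2*A^2*x^3) (at x)"
  unfolding G_fun_def[abs_def]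
  by (rule derivative_eq_intros refl)+ (simp add: algebra_simps power2_eq_square power3_eq_cube)

theorem mainTheorem6:
  fixes A m e \<Lambda>1 \<Lambda>2 :: real
  shows "proj_equiv_on
           {p. F_Lam A m e \<Lambda>1 (p$1) > 0 \<and> F_Lam A m e \<Lambda>2 (p$1) > 0 \<and> G_fun A m e (p$2) > 0}
           (h_Lam A m e \<Lambda>1) (h_Lam A m e \<Lambda>2)"
  unfolding h_Lam_eq_optical_metric
  by (rule proj_equiv_optical_metric[OF F_Lam_has_derivative F_Lam_has_derivative G_fun_has_derivative])

end
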